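(* Let $\widehat{G}$ be a subgroup of $\widehat{\operatorname{PC}^{\bowtie}}$ containing ${\mathfrak S}_{\mathrm{fin}}$ and let $G$ be its image in $\operatorname{PC}^{\bowtie}=\widehat{\operatorname{PC}^{\bowtie}}/{\mathfrak S}_{\mathrm{fin}}$. Then the map $\widehat{G}_{\mathrm{ab}}\to G_{\mathrm{ab}}$ induced by the projection extends to an isomorphism $\widehat{G}_{\mathrm{ab}}\cong G_{\mathrm{ab}}\times\mathbb{Z}/2\mathbb{Z}$. Moreover $D(\widehat{G})=\operatorname{Ker}(\varepsilon)\cap\widehat{D(G)}$, and this is a subgroup of index $2$ in $\widehat{D(G)}$. In particular, if $G$ is perfect then $\widehat{G}_{\mathrm{ab}}\cong\mathbb{Z}/2\mathbb{Z}$.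
   Context: $X=[0,1[$. $\widehat{\operatorname{PC}^{\bowtie}}$ is the group of bijections $X\to X$ continuous outside a finite subset; ${\mathfrak S}_{\mathrm{fin}}$ is its normal subgroup of finitely supported permutations, with classical signature $\operatorname{sgn}:{\mathfrak S}_{\mathrm{fin}}\to\mathbb{Z}/2\mathbb{Z}$. For a group $H$, $D(H)$ is its derived subgroup and $H_{\mathrm{ab}}=H/D(H)$. $\widehat{D(G)}$ denotes the inverse image of $D(G)$ in $\widehat{\operatorname{PC}^{\bowtie}}$. The homomorphism $\varepsilon:\widehat{\operatorname{PC}^{\bowtie}}\to\mathbb{Z}/2\mathbb{Z}$ is defined as follows. For $h\in\widehat{\operatorname{PC}^{\bowtie}}$, a partition associated with $h$ is a finite partition $\mathcal P=\{I_1,\dots,I_n\}$ of $X$ into intervals $I_j=[\alpha_j,b_j[$ such that $h$ is continuous on $I_j^\circ=]\alpha_j,b_j[$ for each $j$ (so $h$ is strictly monotone there and $h(I_j^\circ)$ is an open interval). Let $\beta_j$ be the left endpoint of $h(I_j^\circ)$; $\{h(\alpha_j)\}=\{\beta_j\}$, and $\sigma_{(h,\mathcal P)}\in{\mathfrak S}_{\mathrm{fin}}$ sends $h(\alpha_j)$ to $\beta_j$ for each $j$ and fixes all other points. $R(h,\mathcal P)$ is the number of $j$ with $h$ decreasing on $I_j^\circ$, and $\varepsilon(h,\mathcal P)=R(h,\mathcal P)+\operatorname{sgn}(\sigma_{(h,\mathcal P)})\bmod 2$. There is a unique associated partition $\mathcal P^{\min}_h$ with the fewest intervals, and $\varepsilon(h):=\varepsilon(h,\mathcal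 P^{\min}_h)$; it is a group homomorphism extending $\operatorname{sgn}$. *)

theory Defs
  imports "HOL-Analysis.Analysis" "HOL-Algebra.Algebra" "HOL-Combinatorics.Permutations"
begin

text \<open>The interval X = [0,1[. Maps X -> X are represented by functions real => real
  that are the identity outside X (so that composition and identity behave as in the group).\<close>

definition Xint :: "real set" where
  "Xint = {0..<1}"

text \<open>The group hat(PC) of bijections of X continuous outside a finite subset.\<close>

definition PC_carrier :: "(real \<Rightarrow> real) set" where
  "PC_carrier = {f. bij_betw f Xint Xint \<and> (\<forall>x. x \<notin> Xint \<longrightarrow> f x = x) \<and>
      (\<exists>F. finite F \<and> (\<forall>x \<in> Xint - F. continuous (at x within Xint) f))}"

definition PC :: "(real \<Rightarrow> real) monoid" where
  "PC = \<lparr>carrier = PC_carrier, monoid.mult = (\<circ>), one = id\<rparr>"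

definition Sfin :: "(real \<Rightarrow> real) set" where
  "Sfin = {f. bij_betw f Xint Xint \<and> (\<forall>x. x \<notin> Xint \<longrightarrow> f x = x) \<and> finite {x. f x \<noteq> x}}"

abbreviation Z2 :: "int monoid" where
  "Z2 \<equiv> integer_mod_group 2"

definition sgn2 :: "(real \<Rightarrow> real) \<Rightarrow> int" where
  "sgn2 p = (if evenperm p then 0 else 1)"

text \<open>A finite partition of X into intervals [alpha_j, b_j[ is encoded by the finite set B
  of its left endpoints alpha_j (containing 0); the right endpoint of the interval starting
  at a is the next point of B after a, or 1.\<close>

definition nextpt :: "real set \<Rightarrow> real \<Rightarrow> real" where
  "nextpt B a = Min ({b \<in> B. a < b} \<union> {1})"

definition assoc_partition :: "(real \<Rightarrow> real) \<Rightarrow> real set \<Rightarrow> bool" where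
  "assoc_partition h B \<longleftrightarrow> finite B \<and> 0 \<in> B \<and> B \<subseteq> Xint \<and>
     (\<forall>a \<in> B. continuous_on {a<..<nextpt B a} h)"

definition betapt :: "(real \<Rightarrow> real) \<Rightarrow> real set \<Rightarrow> real \<Rightarrow> real" where
  "betapt h B a = Inf (h ` {a<..<nextpt B a})"

definition sigma_part :: "(real \<Rightarrow> real) \<Rightarrow> real set \<Rightarrow> real \<Rightarrow> real" where
  "sigma_part h B = (\<lambda>y. if y \<in> h ` B then betapt h B (inv_into B h y) else y)"

definition Rcount :: "(real \<Rightarrow> real) \<Rightarrow> real set \<Rightarrow> nat" where
  "Rcount h B = card {a \<in> B. strict_antimono_on {a<..<nextpt B a} h}"

definition eps_part :: "(real \<Rightarrow> real) \<Rightarrow> real set \<Rightarrow> int" where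
  "eps_part h B = (int (Rcount h B) + sgn2 (sigma_part h B)) mod 2"

definition min_partition :: "(real \<Rightarrow> real) \<Rightarrow> real set" where
  "min_partition h = (THE B. assoc_partition h B \<and>
      (\<forall>C. assoc_partition h C \<longrightarrow> card B \<le> card C))"

definition epsilon :: "(real \<Rightarrow> real) \<Rightarrow> int" where
  "epsilon h = eps_part h (min_partition h)"

definition image_grp :: "(real \<Rightarrow> real) set \<Rightarrow> (real \<Rightarrow> real) set monoid" where
  "image_grp Gh = (PC Mod Sfin)\<lparr>carrier := (\<lambda>g. Sfin #>\<^bsub>PC\<^esub> g) ` Gh\<rparr>"

definition hat_derived :: "(real \<Rightarrow> real) set \<Rightarrow> (real \<Rightarrow> real) set" where
  "hat_derived Gh = {g \<in> carrier PC. Sfin #>\<^bsub>PC\<^esub> g \<in> derived (image_grp Gh) (carrier (image_grp Gh))}"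

end

theory Submission
  imports Defs
begin

text \<open>
  Refining an associated partition of \<open>h\<close> by a point \<open>c\<close> inside a piece \<open>I\<close> changes nothing if
  \<open>h\<close> increases on \<open>I\<close>; if \<open>h\<close> decreases on \<open>I\<close>, it adds one decreasing piece and composes
  \<open>\<sigma>\<close> with the transposition of \<open>h \<alpha>\<close> and \<open>h c\<close>. Hence \<open>\<epsilon>(h, P)\<close> is the same for every
  associated partition \<open>P\<close>. For a composite \<open>h \<circ> g\<close> take \<open>P\<close> associated with both \<open>g\<close> and
  \<open>h \<circ> g\<close> such that \<open>g ` P\<close> is associated with \<open>h\<close>: the pieces of \<open>g ` P\<close> are the images
  of those of \<open>P\<close>, so the decreasing counts add up modulo 2 and
  \<open>\<sigma>(h \<circ> g) = \<sigma>(h) \<circ> h \<sigma>(g) h\<inverse>\<close>. Thus \<open>\<epsilon>\<close> is a character, equal to the signature on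
  \<open>Sfin\<close>, and since even permutations are products of commutators of transpositions,
  \<open>Ker \<epsilon> \<inter> Sfin \<subseteq> D(hat G)\<close>. The rest is group theory valid for any normal subgroup
  \<open>N \<subseteq> hat G\<close> with a character \<open>\<epsilon>\<close> to \<open>\<int>/2\<close> that is nontrivial on \<open>N\<close> and whose kernel
  on \<open>N\<close> lies in \<open>D(hat G)\<close>: the map \<open>g \<mapsto> (g D(G), \<epsilon> g)\<close> is onto
  \<open>G\<^sub>a\<^sub>b \<times> \<int>/2\<close> and has kernel \<open>Ker \<epsilon> \<inter> hat D(G)\<close>, which therefore is \<open>D(hat G)\<close>.
\<close>

section \<open>Partitions of X into intervals\<close>

lemma Xint_iff: "x \<in> Xint \<longleftrightarrow> 0 \<le> x \<and> x < 1"
  by (simp add: Xint_def)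

abbreviation part_ivl :: "real set \<Rightarrow> real \<Rightarrow> real set" where
  "part_ivl B a \<equiv> {a<..<nextpt B a}"

lemma nextpt_mem: "finite B \<Longrightarrow> nextpt B a \<in> insert 1 B"
  unfolding nextpt_def using Min_in[of "{b \<in> B. a < b} \<union> {1}"] by auto

lemma nextpt_le_one: "finite B \<Longrightarrow> nextpt B a \<le> 1"
  unfolding nextpt_def by simp

lemma nextpt_le: "finite B \<Longrightarrow> b \<in> B \<Longrightarrow> a < b \<Longrightarrow> nextpt B a \<le> b"
  unfolding nextpt_def by simp

lemma nextpt_gt: "finite B \<Longrightarrow> a < 1 \<Longrightarrow> a < nextpt B a"
  unfolding nextpt_def using Min_in[of "{b \<in> B. a < b} \<union> {1}"] by auto

lemma nextpt_eqI:
  assumes "finite B" "m \<in> insert 1 B" "a < m" "m \<le> 1" "\<And>b. b \<in> B \<Longrightarrow> a < b \<Longrightarrow> m \<le> b"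
  shows "nextpt B a = m"
  unfolding nextpt_def using assms by (intro Min_eqI) auto

lemma part_ivl_subset:
  assumes "finite B" "B \<subseteq> Xint" "a \<in> B"
  shows "part_ivl B a \<subseteq> Xint - B"
proof
  fix x assume x: "x \<in> part_ivl B a"
  have "x \<notin> B" using x nextpt_le[OF assms(1), of _ a] by force
  moreover have "x \<in> Xint" using x assms nextpt_le_one[OF assms(1), of a] by (auto simp: Xint_iff)
  ultimately show "x \<in> Xint - B" by blast
qed

lemma part_ivl_cover:
  assumes "finite B" "0 \<in> B" "x \<in> Xint - B"
  shows "\<exists>a\<in>B. x \<in> part_ivl B a"
proof -
  let ?T = "{b \<in> B. b < x}"
  have "0 < x" using assms by (cases "x = 0") (auto simp: Xint_iff)
  then have T: "finite ?T" "?T \<noteq> {}" using assms by auto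
  define a where "a = Max ?T"
  have a: "a \<in> B" "a < x" using Max_in[OF T] unfolding a_def by auto
  have "x < nextpt B a"
  proof (rule ccontr)
    assume "\<not> x < nextpt B a"
    moreover have "a < nextpt B a" "nextpt B a \<in> insert 1 B"
      using nextpt_gt[OF assms(1)] nextpt_mem[OF assms(1)] a assms(3) by (auto simp: Xint_iff)
    ultimately have "nextpt B a \<in> ?T" using assms(3) by (cases "nextpt B a = x") (auto simp: Xint_iff)
    then show False using Max_ge[OF T(1)] \<open>a < nextpt B a\<close> unfolding a_def by fastforce
  qed
  then show ?thesis using a by auto
qed

lemma part_ivl_disjoint:
  assumes "finite B" "a \<in> B" "a' \<in> B" "x \<in> part_ivl B a" "x \<in> part_ivl B a'"
  shows "a = a'"
  using nextpt_le[OF assms(1) assms(3), of a] nextpt_le[OF assms(1) assms(2), of a'] assms(4,5)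
  by (cases a a' rule: linorder_cases) auto

lemma assoc_partition_iff:
  "assoc_partition h B \<longleftrightarrow> finite B \<and> 0 \<in> B \<and> B \<subseteq> Xint \<and> (\<forall>x \<in> Xint - B. isCont h x)"
proof
  assume A: "assoc_partition h B"
  then have B: "finite B" "0 \<in> B" "B \<subseteq> Xint" by (auto simp: assoc_partition_def)
  have "isCont h x" if x: "x \<in> Xint - B" for x
  proof -
    obtain a where "a \<in> B" "x \<in> part_ivl B a" using part_ivl_cover[OF B(1,2) x] by blast
    then show ?thesis using A by (auto simp: assoc_partition_def continuous_on_eq_continuous_at)
  qed
  then show "finite B \<and> 0 \<in> B \<and> B \<subseteq> Xint \<and> (\<forall>x \<in> Xint - B. isCont h x)" using B by blast
next
  assume "finite B \<and> 0 \<in> B \<and> B \<subseteq> Xint \<and> (\<forall>x \<in> Xint - B. isCont h x)"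
  then show "assoc_partition h B"
    unfolding assoc_partition_def using part_ivl_subset
    by (metis (no_types, lifting) continuous_at_imp_continuous_on subset_iff)
qed

lemma assoc_partitionD:
  assumes "assoc_partition h B"
  shows "finite B" "0 \<in> B" "B \<subseteq> Xint" "\<And>x. x \<in> Xint - B \<Longrightarrow> isCont h x"
  using assms unfolding assoc_partition_iff by auto

section \<open>Continuous injections of open intervals\<close>

lemma strict_mono_on_not_antimono:
  fixes h :: "real \<Rightarrow> real"
  assumes "u < v" "strict_mono_on {u<..<v} h"
  shows "\<not> strict_antimono_on {u<..<v} h"
proof
  assume anti: "strict_antimono_on {u<..<v} h"
  define x y where "x = u + (v - u) / 3" and "y = u + 2 * (v - u) / 3"
  have xy: "x \<in> {u<..<v}" "y \<in> {u<..<v}" "x < y" using assms(1) unfolding x_def y_def by (auto simp: field_simps)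
  show False using monotone_onD[OF assms(2) xy] monotone_onD[OF anti xy] by simp
qed

lemma continuous_inj_image_greaterThanLessThan:
  fixes h :: "real \<Rightarrow> real"
  assumes "u < v" "continuous_on {u<..<v} h" "inj_on h {u<..<v}"
    and bdd: "bdd_below (h ` {u<..<v})" "bdd_above (h ` {u<..<v})"
  shows "h ` {u<..<v} = {Inf (h ` {u<..<v})<..<Sup (h ` {u<..<v})}"
proof -
  let ?S = "h ` {u<..<v}"
  have mono: "strict_mono_on {u<..<v} h \<or> strict_antimono_on {u<..<v} h"
    using injective_eq_monotone_map[of "{u<..<v}" h] assms(2,3) by (simp add: is_interval_def)
  have no_extremum: "\<exists>z\<in>?S. z < y" "\<exists>z\<in>?S. y < z" if y: "y \<in> ?S" for y
  proof -
    obtain x where x: "x \<in> {u<..<v}" "y = h x" using y by blast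
    have x12: "(u + x) / 2 \<in> {u<..<v}" "(x + v) / 2 \<in> {u<..<v}" "(u + x) / 2 < x" "x < (x + v) / 2"
      using x by auto
    from mono have "(h ((u + x) / 2) < h x \<and> h x < h ((x + v) / 2)) \<or>
        (h ((x + v) / 2) < h x \<and> h x < h ((u + x) / 2))"
      using x12 x(1) unfolding monotone_on_def by blast
    then show "\<exists>z\<in>?S. z < y" "\<exists>z\<in>?S. y < z" using x12 x by blast+
  qed
  show ?thesis
  proof
    show "?S \<subseteq> {Inf ?S<..<Sup ?S}"
    proof
      fix y assume y: "y \<in> ?S"
      obtain z1 z2 where "z1 \<in> ?S" "z1 < y" "z2 \<in> ?S" "y < z2" using no_extremum[OF y] by blast
      then show "y \<in> {Inf ?S<..<Sup ?S}"
        using cInf_lower[OF _ bdd(1), of z1] cSup_upper[OF _ bdd(2), of z2] by auto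
    qed
    have conn: "connected ?S" using connected_continuous_image[OF assms(2)] by simp
    have ne: "?S \<noteq> {}" using assms(1) by auto
    show "{Inf ?S<..<Sup ?S} \<subseteq> ?S"
    proof
      fix y assume y: "y \<in> {Inf ?S<..<Sup ?S}"
      obtain z1 z2 where z: "z1 \<in> ?S" "z1 < y" "z2 \<in> ?S" "y < z2"
        using y cInf_less_iff[OF ne bdd(1)] less_cSup_iff[OF ne bdd(2)] by auto
      show "y \<in> ?S" using connectedD_interval[OF conn z(1,3), of y] z(2,4) by simp
    qed
  qed
qed

lemma strict_mono_on_image_split:
  fixes h :: "real \<Rightarrow> real"
  assumes mono: "strict_mono_on {a<..<n} h" and img: "h ` {a<..<n} = {l<..<u}" and c: "c \<in> {a<..<n}"
  shows "h ` {a<..<c} = {l<..<h c}" "h ` {c<..<n} = {h c<..<u}"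
proof -
  have lt: "x < c \<longleftrightarrow> h x < h c" and gt: "c < x \<longleftrightarrow> h c < h x" if "x \<in> {a<..<n}" for x
    using monotone_onD[OF mono that c] monotone_onD[OF mono c that]
    by (cases x c rule: linorder_cases; simp)+
  have into: "h x \<in> {l<..<u}" if "x \<in> {a<..<n}" for x using img that by blast
  have onto: "\<exists>x \<in> {a<..<n}. y = h x" if "y \<in> {l<..<u}" for y using img that by blast
  have hc: "h c \<in> {l<..<u}" using into c .
  show "h ` {a<..<c} = {l<..<h c}"
  proof
    show "h ` {a<..<c} \<subseteq> {l<..<h c}"
    proof (rule image_subsetI)
      fix x assume "x \<in> {a<..<c}"
      then have "x \<in> {a<..<n}" "x < c" using c by auto
      then show "h x \<in> {l<..<h c}" using lt into by auto
    qed
    show "{l<..<h c} \<subseteq> h ` {a<..<c}"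
    proof
      fix y assume y: "y \<in> {l<..<h c}"
      then have "y \<in> {l<..<u}" using hc by auto
      then obtain x where "x \<in> {a<..<n}" "y = h x" using onto by blast
      then show "y \<in> h ` {a<..<c}" using lt y by auto
    qed
  qed
  show "h ` {c<..<n} = {h c<..<u}"
  proof
    show "h ` {c<..<n} \<subseteq> {h c<..<u}"
    proof (rule image_subsetI)
      fix x assume "x \<in> {c<..<n}"
      then have "x \<in> {a<..<n}" "c < x" using c by auto
      then show "h x \<in> {h c<..<u}" using gt into by auto
    qed
    show "{h c<..<u} \<subseteq> h ` {c<..<n}"
    proof
      fix y assume y: "y \<in> {h c<..<u}"
      then have "y \<in> {l<..<u}" using hc by auto
      then obtain x where "x \<in> {a<..<n}" "y = h x" using onto by blast
      then show "y \<in> h ` {c<..<n}" using gt y by auto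
    qed
  qed
qed

lemma strict_antimono_on_image_split:
  fixes h :: "real \<Rightarrow> real"
  assumes anti: "strict_antimono_on {a<..<n} h" and img: "h ` {a<..<n} = {l<..<u}" and c: "c \<in> {a<..<n}"
  shows "h ` {a<..<c} = {h c<..<u}" "h ` {c<..<n} = {l<..<h c}"
proof -
  have neg: "(\<lambda>x. - h x) ` A = uminus ` h ` A" and pos: "h ` A = uminus ` (\<lambda>x. - h x) ` A" for A
    by (simp_all add: image_image)
  have "strict_mono_on {a<..<n} (\<lambda>x. - h x)" using anti by (simp add: monotone_on_def)
  moreover have "(\<lambda>x. - h x) ` {a<..<n} = {-u<..<-l}" unfolding neg img by simp
  ultimately show "h ` {a<..<c} = {h c<..<u}" "h ` {c<..<n} = {l<..<h c}"
    using strict_mono_on_image_split[OF _ _ c, of "\<lambda>x. - h x"] pos by simp_all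
qed

section \<open>The pieces of an element of PC\<close>

lemma PC_carrierD:
  assumes "h \<in> PC_carrier"
  shows "bij_betw h Xint Xint" "\<And>x. x \<notin> Xint \<Longrightarrow> h x = x" "inj_on h Xint" "h ` Xint = Xint"
  using assms unfolding PC_carrier_def bij_betw_def by auto

text \<open>A definition rather than an abbreviation: as an abbreviation, \<open>piece_image\<close> below
  would be a looping rewrite rule.\<close>

definition toppt :: "(real \<Rightarrow> real) \<Rightarrow> real set \<Rightarrow> real \<Rightarrow> real" where
  "toppt h B a = Sup (h ` part_ivl B a)"

context
  fixes h :: "real \<Rightarrow> real" and B :: "real set"
  assumes h: "h \<in> PC_carrier" and B: "assoc_partition h B"
begin

lemma piece_subset: "a \<in> B \<Longrightarrow> part_ivl B a \<subseteq> Xint - B"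
  using part_ivl_subset assoc_partitionD[OF B] by blast

lemma piece_nonempty: "a \<in> B \<Longrightarrow> a < nextpt B a"
  using nextpt_gt assoc_partitionD(1,3)[OF B] by (auto simp: Xint_iff)

lemma piece_continuous: "a \<in> B \<Longrightarrow> continuous_on (part_ivl B a) h"
  using B by (simp add: assoc_partition_def)

lemma piece_inj_on: "a \<in> B \<Longrightarrow> inj_on h (part_ivl B a)"
  using inj_on_subset[OF PC_carrierD(3)[OF h]] piece_subset by blast

lemma piece_mono: "a \<in> B \<Longrightarrow> strict_mono_on (part_ivl B a) h \<or> strict_antimono_on (part_ivl B a) h"
  using injective_eq_monotone_map[of "part_ivl B a" h] piece_continuous piece_inj_on
  by (simp add: is_interval_def)

lemma piece_image_subset: "a \<in> B \<Longrightarrow> h ` part_ivl B a \<subseteq> Xint"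
  using piece_subset PC_carrierD(4)[OF h] by blast

lemma piece_image:
  assumes "a \<in> B"
  shows "h ` part_ivl B a = {betapt h B a<..<toppt h B a}"
proof -
  have "bdd_below (h ` part_ivl B a)" "bdd_above (h ` part_ivl B a)"
    using piece_image_subset[OF assms] unfolding bdd_below_def bdd_above_def Xint_def
    by (meson atLeastLessThan_iff less_imp_le subsetD)+
  then show ?thesis
    using continuous_inj_image_greaterThanLessThan[OF piece_nonempty piece_continuous piece_inj_on] assms
    unfolding betapt_def toppt_def by blast
qed

lemma piece_bounds:
  assumes "a \<in> B"
  shows "0 \<le> betapt h B a" "betapt h B a < toppt h B a" "toppt h B a \<le> 1"
proof -
  have ne: "h ` part_ivl B a \<noteq> {}" using piece_nonempty[OF assms] by simp
  show "0 \<le> betapt h B a" unfolding betapt_def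
    using piece_image_subset[OF assms] by (intro cInf_greatest[OF ne]) (auto simp: Xint_iff)
  show "toppt h B a \<le> 1" unfolding toppt_def
    using piece_image_subset[OF assms] by (intro cSup_least[OF ne]) (auto simp: Xint_iff)
  show "betapt h B a < toppt h B a" using ne piece_image[OF assms] by (metis greaterThanLessThan_empty_iff not_less)
qed

lemma piece_images_disjoint:
  assumes "a \<in> B" "a' \<in> B"
    and "max (betapt h B a) (betapt h B a') < min (toppt h B a) (toppt h B a')"
  shows "a = a'"
proof -
  obtain t where "max (betapt h B a) (betapt h B a') < t" "t < min (toppt h B a) (toppt h B a')"
    using dense[OF assms(3)] by blast
  then have "t \<in> h ` part_ivl B a" "t \<in> h ` part_ivl B a'"
    unfolding piece_image[OF assms(1)] piece_image[OF assms(2)] by simp_all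
  then obtain x x' where x: "x \<in> part_ivl B a" "x' \<in> part_ivl B a'" "h x = h x'"
    by (metis imageE)
  moreover have "x \<in> Xint" "x' \<in> Xint" using x piece_subset assms(1,2) by blast+
  ultimately have "x = x'" using inj_onD[OF PC_carrierD(3)[OF h] x(3)] by blast
  with x show ?thesis using part_ivl_disjoint assoc_partitionD(1)[OF B] assms(1,2) by blast
qed

lemma piece_image_cover:
  assumes "y \<in> Xint - h ` B"
  shows "\<exists>a'\<in>B. y \<in> {betapt h B a'<..<toppt h B a'}"
proof -
  obtain x where "x \<in> Xint - B" "y = h x" using assms PC_carrierD(4)[OF h] by blast
  then show ?thesis using part_ivl_cover assoc_partitionD(1,2)[OF B] piece_image by blast
qed

text \<open>The endpoints of the image of a piece are images of partition points: otherwise they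
  would lie inside the image of another piece, which would then overlap the first one.\<close>

lemma betapt_mem_image:
  assumes "a \<in> B"
  shows "betapt h B a \<in> h ` B"
proof (rule ccontr)
  assume "betapt h B a \<notin> h ` B"
  then have "betapt h B a \<in> Xint - h ` B" using piece_bounds[OF assms] by (simp add: Xint_iff)
  then obtain a' where a': "a' \<in> B" "betapt h B a \<in> {betapt h B a'<..<toppt h B a'}"
    using piece_image_cover by blast
  then have "a = a'" using piece_images_disjoint[OF assms a'(1)] piece_bounds(2)[OF assms] by simp
  then show False using a'(2) by simp
qed

lemma toppt_mem_image:
  assumes "a \<in> B" "toppt h B a < 1"
  shows "toppt h B a \<in> h ` B"
proof (rule ccontr)
  assume "toppt h B a \<notin> h ` B"
  then have "toppt h B a \<in> Xint - h ` B" using piece_bounds[OF assms(1)] assms(2) by (simp add: Xint_iff)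
  then obtain a' where a': "a' \<in> B" "toppt h B a \<in> {betapt h B a'<..<toppt h B a'}"
    using piece_image_cover by blast
  then have "a = a'" using piece_images_disjoint[OF assms(1) a'(1)] piece_bounds(2)[OF assms(1)] by simp
  then show False using a'(2) by simp
qed

lemma betapt_inj_on: "inj_on (betapt h B) B"
proof (rule inj_onI)
  fix a a' assume "a \<in> B" "a' \<in> B" "betapt h B a = betapt h B a'"
  then show "a = a'" using piece_images_disjoint[of a a'] piece_bounds(2)[of a] piece_bounds(2)[of a'] by simp
qed

lemma inj_on_partition: "inj_on h B"
  using inj_on_subset[OF PC_carrierD(3)[OF h] assoc_partitionD(3)[OF B]] .

lemma betapt_image: "betapt h B ` B = h ` B"
proof (rule card_subset_eq)
  show "finite (h ` B)" using assoc_partitionD(1)[OF B] by simp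
  show "betapt h B ` B \<subseteq> h ` B" using betapt_mem_image by blast
  show "card (betapt h B ` B) = card (h ` B)"
    using card_image[OF betapt_inj_on] card_image[OF inj_on_partition] by simp
qed

lemma sigma_part_image: "b \<in> B \<Longrightarrow> sigma_part h B (h b) = betapt h B b"
  unfolding sigma_part_def using inv_into_f_f[OF inj_on_partition] by simp

lemma sigma_part_permutes: "sigma_part h B permutes h ` B"
proof (rule bij_imp_permutes)
  have "sigma_part h B ` h ` B = betapt h B ` B"
    unfolding image_image using sigma_part_image by simp
  then have "sigma_part h B ` h ` B = h ` B" using betapt_image by simp
  moreover have "inj_on (sigma_part h B) (h ` B)"
    using sigma_part_image betapt_inj_on by (auto simp: inj_on_def)
  ultimately show "bij_betw (sigma_part h B) (h ` B) (h ` B)" by (simp add: bij_betw_def)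
qed (simp add: sigma_part_def)

lemma permutation_sigma_part: "permutation (sigma_part h B)"
  using permutation_permutes sigma_part_permutes assoc_partitionD(1)[OF B] by blast

end

lemma sigma_part_outside: "y \<notin> h ` B \<Longrightarrow> sigma_part h B y = y"
  by (simp add: sigma_part_def)

section \<open>Independence of the partition\<close>

context
  fixes h :: "real \<Rightarrow> real" and B :: "real set" and a c :: real
  assumes h: "h \<in> PC_carrier" and B: "assoc_partition h B" and a: "a \<in> B" and c: "c \<in> part_ivl B a"
begin

lemma assoc_partition_insert: "assoc_partition h (insert c B)"
  using B piece_subset[OF h B a] c unfolding assoc_partition_iff by auto

lemma nextpt_insert_left: "nextpt (insert c B) a = c"
  using assoc_partitionD(1)[OF B] c nextpt_le_one[of B a] nextpt_le[of B _ a]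
  by (intro nextpt_eqI) force+

lemma nextpt_insert_right: "nextpt (insert c B) c = nextpt B a"
  using assoc_partitionD(1)[OF B] c nextpt_le_one[of B a] nextpt_le[of B _ a] nextpt_mem[of B a]
  by (intro nextpt_eqI) force+

lemma nextpt_insert_other:
  assumes "b \<in> B" "b \<noteq> a"
  shows "nextpt (insert c B) b = nextpt B b"
proof (rule nextpt_eqI)
  have fin: "finite B" using assoc_partitionD(1)[OF B] .
  have "b < 1" using assms(1) assoc_partitionD(3)[OF B] by (auto simp: Xint_iff)
  then show "finite (insert c B)" "nextpt B b \<in> insert 1 (insert c B)" "b < nextpt B b" "nextpt B b \<le> 1"
    using fin nextpt_mem nextpt_gt nextpt_le_one by auto
  fix b' assume b': "b' \<in> insert c B" "b < b'"
  show "nextpt B b \<le> b'"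
  proof (cases "b' = c")
    case True
    have "c \<notin> part_ivl B b" using part_ivl_disjoint[OF fin a assms(1) c] assms(2) by blast
    then show ?thesis using True b'(2) by auto
  qed (use b' nextpt_le[OF fin] in auto)
qed

lemma antimono_on_split_iff:
  "strict_antimono_on {a<..<c} h \<longleftrightarrow> strict_antimono_on (part_ivl B a) h"
  "strict_antimono_on {c<..<nextpt B a} h \<longleftrightarrow> strict_antimono_on (part_ivl B a) h"
proof -
  have sub: "{a<..<c} \<subseteq> part_ivl B a" "{c<..<nextpt B a} \<subseteq> part_ivl B a" using c by auto
  have "\<not> strict_antimono_on {a<..<c} h" "\<not> strict_antimono_on {c<..<nextpt B a} h"
    if "\<not> strict_antimono_on (part_ivl B a) h"
  proof -
    have mono: "strict_mono_on (part_ivl B a) h" using piece_mono[OF h B a] that by blast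
    show "\<not> strict_antimono_on {a<..<c} h" "\<not> strict_antimono_on {c<..<nextpt B a} h"
      using strict_mono_on_not_antimono monotone_on_subset[OF mono sub(1)]
        monotone_on_subset[OF mono sub(2)] c by auto
  qed
  then show "strict_antimono_on {a<..<c} h \<longleftrightarrow> strict_antimono_on (part_ivl B a) h"
    "strict_antimono_on {c<..<nextpt B a} h \<longleftrightarrow> strict_antimono_on (part_ivl B a) h"
    using monotone_on_subset[OF _ sub(1)] monotone_on_subset[OF _ sub(2)] by blast+
qed

lemma Rcount_insert:
  "Rcount h (insert c B) = Rcount h B + (if strict_antimono_on (part_ivl B a) h then 1 else 0)"
proof -
  let ?A = "{b \<in> B. strict_antimono_on (part_ivl B b) h}"
  have cB: "c \<notin> B" using piece_subset[OF h B a] c by blast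
  have "{b \<in> insert c B. strict_antimono_on (part_ivl (insert c B) b) h} =
      (if strict_antimono_on (part_ivl B a) h then insert c ?A else ?A)"
  proof (rule Set.set_eqI)
    fix b
    show "b \<in> {b \<in> insert c B. strict_antimono_on (part_ivl (insert c B) b) h} \<longleftrightarrow>
        b \<in> (if strict_antimono_on (part_ivl B a) h then insert c ?A else ?A)"
      using nextpt_insert_left nextpt_insert_right nextpt_insert_other[of b] antimono_on_split_iff a cB
      by (cases "b = a"; cases "b = c") auto
  qed
  then show ?thesis unfolding Rcount_def using assoc_partitionD(1)[OF B] cB by simp
qed

lemma betapt_insert_other: "b \<in> B \<Longrightarrow> b \<noteq> a \<Longrightarrow> betapt h (insert c B) b = betapt h B b"
  unfolding betapt_def using nextpt_insert_other by simp

lemma betapt_insert: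
  "betapt h (insert c B) a = (if strict_antimono_on (part_ivl B a) h then h c else betapt h B a)"
  "betapt h (insert c B) c = (if strict_antimono_on (part_ivl B a) h then betapt h B a else h c)"
proof -
  let ?anti = "strict_antimono_on (part_ivl B a) h"
  have img: "h ` part_ivl B a = {betapt h B a<..<toppt h B a}" using piece_image[OF h B a] .
  then have hc: "betapt h B a < h c" "h c < toppt h B a" using c by auto
  have "h ` {a<..<c} = (if ?anti then {h c<..<toppt h B a} else {betapt h B a<..<h c}) \<and>
      h ` {c<..<nextpt B a} = (if ?anti then {betapt h B a<..<h c} else {h c<..<toppt h B a})"
  proof (cases ?anti)
    case True
    then show ?thesis using strict_antimono_on_image_split[OF True img c] by simp
  next
    case False
    then have "strict_mono_on (part_ivl B a) h" using piece_mono[OF h B a] by blast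
    then show ?thesis using strict_mono_on_image_split[OF _ img c] False by simp
  qed
  then show "betapt h (insert c B) a = (if ?anti then h c else betapt h B a)"
    "betapt h (insert c B) c = (if ?anti then betapt h B a else h c)"
    unfolding betapt_def nextpt_insert_left nextpt_insert_right using hc by (simp_all add: betapt_def)
qed

lemma split_point_image_notin: "h c \<notin> h ` B"
proof
  assume "h c \<in> h ` B"
  then obtain b where "b \<in> B" "h c = h b" by blast
  moreover have "c \<in> Xint - B" using piece_subset[OF h B a] c by blast
  ultimately show False
    using inj_onD[OF PC_carrierD(3)[OF h]] assoc_partitionD(3)[OF B] by (metis DiffD1 DiffD2 subsetD)
qed

lemma sigma_part_insert:
  "sigma_part h (insert c B) =
    (if strict_antimono_on (part_ivl B a) h then sigma_part h B \<circ> Transposition.transpose (h a) (h c)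
     else sigma_part h B)"
proof
  fix y
  let ?anti = "strict_antimono_on (part_ivl B a) h"
  have hcB: "h c \<notin> h ` B" using split_point_image_notin .
  have ha: "h a \<in> h ` B" "h a \<noteq> h c" using a hcB by (blast, metis image_eqI)
  have new: "sigma_part h (insert c B) (h b) = betapt h (insert c B) b" if "b \<in> insert c B" for b
    using sigma_part_image[OF h assoc_partition_insert that] .
  have old: "sigma_part h B (h b) = betapt h B b" if "b \<in> B" for b
    using sigma_part_image[OF h B that] .
  consider "y \<notin> h ` insert c B" | "y = h c" | "y = h a" | b where "b \<in> B" "b \<noteq> a" "y = h b"
    by blast
  then show "sigma_part h (insert c B) y =
      (if ?anti then sigma_part h B \<circ> Transposition.transpose (h a) (h c) else sigma_part h B) y"
  proof cases
    case 1
    then have "y \<noteq> h a" "y \<noteq> h c" "y \<notin> h ` B" using a by auto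
    then show ?thesis using sigma_part_outside[OF 1] by (simp add: sigma_part_outside)
  next
    case 2
    then show ?thesis using new[of c] old[OF a] betapt_insert(2) sigma_part_outside[OF hcB] by simp
  next
    case 3
    then show ?thesis using new[of a] old[OF a] betapt_insert(1) sigma_part_outside[OF hcB] a ha(2) by simp
  next
    case 4
    have "h b \<noteq> h a" using inj_onD[OF inj_on_partition[OF h B] _ 4(1) a] 4(2) by blast
    moreover have "h b \<noteq> h c" using hcB 4(1) by (metis image_eqI)
    ultimately show ?thesis using 4 new[of b] old[of b] betapt_insert_other by simp
  qed
qed

lemma eps_part_insert: "eps_part h (insert c B) = eps_part h B"
proof (cases "strict_antimono_on (part_ivl B a) h")
  case True
  have "h a \<noteq> h c" using a split_point_image_notin by (metis image_eqI)
  then have "evenperm (sigma_part h (insert c B)) \<longleftrightarrow> \<not> evenperm (sigma_part h B)"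
    unfolding sigma_part_insert using True evenperm_comp[OF permutation_sigma_part[OF h B] permutation_swap_id]
    by (simp add: evenperm_swap)
  then show ?thesis unfolding eps_part_def sgn2_def Rcount_insert using True
    by (cases "evenperm (sigma_part h B)") (simp_all, presburger)
next
  case False
  then show ?thesis unfolding eps_part_def Rcount_insert sigma_part_insert by simp
qed

end

lemma eps_part_refine:
  assumes h: "h \<in> PC_carrier" and B: "assoc_partition h B" and C: "finite C" "B \<subseteq> C" "C \<subseteq> Xint"
  shows "eps_part h C = eps_part h B"
proof -
  have "eps_part h (B \<union> D) = eps_part h B" if "finite D" "D \<subseteq> Xint" for D
    using that
  proof (induction D rule: finite_induct)
    case (insert d D)
    have BD: "assoc_partition h (B \<union> D)" using B insert unfolding assoc_partition_iff by auto
    show ?case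
    proof (cases "d \<in> B \<union> D")
      case False
      then obtain a where "a \<in> B \<union> D" "d \<in> part_ivl (B \<union> D) a"
        using part_ivl_cover assoc_partitionD(1,2)[OF BD] insert.prems by blast
      then show ?thesis using eps_part_insert[OF h BD] insert by simp
    qed (use insert in \<open>simp add: insert_absorb\<close>)
  qed simp
  from this[of "C - B"] have "eps_part h (B \<union> (C - B)) = eps_part h B" using C by auto
  moreover have "B \<union> (C - B) = C" using C(2) by blast
  ultimately show ?thesis by simp
qed

definition discont_partition :: "(real \<Rightarrow> real) \<Rightarrow> real set" where
  "discont_partition h = insert 0 {x \<in> Xint. \<not> isCont h x}"

lemma discont_partition_subset: "assoc_partition h C \<Longrightarrow> discont_partition h \<subseteq> C"
  using assoc_partitionD[of h C] unfolding discont_partition_def by blast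

lemma assoc_discont_partition:
  assumes "assoc_partition h C"
  shows "assoc_partition h (discont_partition h)"
proof -
  have "finite (discont_partition h)"
    using finite_subset[OF discont_partition_subset[OF assms] assoc_partitionD(1)[OF assms]] .
  moreover have "discont_partition h \<subseteq> Xint" unfolding discont_partition_def by (auto simp: Xint_iff)
  moreover have "0 \<in> discont_partition h" "\<forall>x \<in> Xint - discont_partition h. isCont h x"
    unfolding discont_partition_def by blast+
  ultimately show ?thesis unfolding assoc_partition_iff by (intro conjI)
qed

lemma min_partition_eq:
  assumes "assoc_partition h C"
  shows "min_partition h = discont_partition h"
  unfolding min_partition_def
proof (rule the_equality)
  have "card (discont_partition h) \<le> card C'" if "assoc_partition h C'" for C'
    using card_mono[OF assoc_partitionD(1)[OF that] discont_partition_subset[OF that]] .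
  then show "assoc_partition h (discont_partition h) \<and>
      (\<forall>C. assoc_partition h C \<longrightarrow> card (discont_partition h) \<le> card C)"
    using assoc_discont_partition[OF assms] by blast
next
  fix B assume B: "assoc_partition h B \<and> (\<forall>C. assoc_partition h C \<longrightarrow> card B \<le> card C)"
  then have "card B \<le> card (discont_partition h)" using assoc_discont_partition[OF assms] by blast
  then show "B = discont_partition h"
    using card_seteq[OF assoc_partitionD(1) discont_partition_subset] B by blast
qed

lemma epsilon_eq_eps_part:
  assumes h: "h \<in> PC_carrier" and C: "assoc_partition h C"
  shows "epsilon h = eps_part h C"
  unfolding epsilon_def min_partition_eq[OF C]
  using eps_part_refine[OF h assoc_discont_partition[OF C]] discont_partition_subset[OF C]
    assoc_partitionD(1,3)[OF C] by simp

lemma PC_carrier_assoc_partition: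
  assumes h: "h \<in> PC_carrier"
  obtains C where "assoc_partition h C"
proof -
  obtain F where F: "finite F" "\<forall>x \<in> Xint - F. continuous (at x within Xint) h"
    using h unfolding PC_carrier_def by blast
  have "isCont h x" if x: "x \<in> Xint - insert 0 (F \<inter> Xint)" for x
  proof -
    have "continuous (at x within Xint) h" using F x by blast
    then have "continuous (at x within {0<..<1}) h"
      by (rule continuous_within_subset) (auto simp: Xint_def)
    then show ?thesis using x continuous_within_open[of x "{0<..<1}"] by (auto simp: Xint_iff)
  qed
  moreover have "finite (insert 0 (F \<inter> Xint))" "insert 0 (F \<inter> Xint) \<subseteq> Xint"
    using F(1) by (auto simp: Xint_iff)
  ultimately have "assoc_partition h (insert 0 (F \<inter> Xint))"
    unfolding assoc_partition_iff by blast
  then show ?thesis using that by blast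
qed

section \<open>The homomorphism property of \<open>\<epsilon>\<close>\<close>

lemma common_refinement:
  assumes g: "g \<in> PC_carrier" and B: "assoc_partition g B" and C: "assoc_partition h C"
  defines "P \<equiv> B \<union> (g -` C \<inter> Xint)"
  shows "assoc_partition g P" "assoc_partition h (g ` P)" "assoc_partition (h \<circ> g) P"
proof -
  have finP: "finite P"
    unfolding P_def using assoc_partitionD(1)[OF B] finite_vimage_IntI[OF assoc_partitionD(1)[OF C] PC_carrierD(3)[OF g]]
    by simp
  have PX: "P \<subseteq> Xint" unfolding P_def using assoc_partitionD(3)[OF B] by blast
  have "g ` (g -` C \<inter> Xint) = C"
  proof
    show "C \<subseteq> g ` (g -` C \<inter> Xint)"
    proof
      fix c assume "c \<in> C"
      then obtain x where "x \<in> Xint" "c = g x" using assoc_partitionD(3)[OF C] PC_carrierD(4)[OF g] by blast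
      then show "c \<in> g ` (g -` C \<inter> Xint)" using \<open>c \<in> C\<close> by blast
    qed
  qed blast
  then have gP: "g ` P = g ` B \<union> C" unfolding P_def by blast
  show "assoc_partition g P" using B finP PX unfolding assoc_partition_iff P_def by blast
  have "finite (g ` P)" "g ` P \<subseteq> Xint" using finP PX PC_carrierD(4)[OF g] by auto
  then show "assoc_partition h (g ` P)" using C unfolding assoc_partition_iff gP by blast
  have "isCont (h \<circ> g) x" if x: "x \<in> Xint - P" for x
  proof (rule continuous_at_compose)
    show "isCont g x" using B x unfolding assoc_partition_iff P_def by blast
    have "g x \<in> Xint" using x PC_carrierD(4)[OF g] by blast
    moreover have "g x \<notin> C" using x unfolding P_def by blast
    ultimately show "isCont h (g x)" using C unfolding assoc_partition_iff by blast
  qed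
  then show "assoc_partition (h \<circ> g) P"
    using B finP PX unfolding assoc_partition_iff P_def by blast
qed

lemma PC_carrier_comp:
  assumes g: "g \<in> PC_carrier" and h: "h \<in> PC_carrier"
  shows "h \<circ> g \<in> PC_carrier"
proof -
  obtain B C where B: "assoc_partition g B" and C: "assoc_partition h C"
    using PC_carrier_assoc_partition g h by metis
  obtain P where P: "assoc_partition (h \<circ> g) P" using common_refinement(3)[OF g B C] by blast
  have "bij_betw (h \<circ> g) Xint Xint" using bij_betw_trans PC_carrierD(1) g h by blast
  moreover have "\<forall>x. x \<notin> Xint \<longrightarrow> (h \<circ> g) x = x" using PC_carrierD(2)[OF g] PC_carrierD(2)[OF h] by simp
  moreover have "\<forall>x \<in> Xint - P. continuous (at x within Xint) (h \<circ> g)"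
    using assoc_partitionD(4)[OF P] continuous_at_imp_continuous_within by blast
  ultimately show ?thesis unfolding PC_carrier_def using assoc_partitionD(1)[OF P] by blast
qed

lemma part_ivl_image_betapt:
  assumes g: "g \<in> PC_carrier" and P: "assoc_partition g P" and a: "a \<in> P"
  shows "part_ivl (g ` P) (betapt g P a) = g ` part_ivl P a"
proof -
  have "nextpt (g ` P) (betapt g P a) = toppt g P a"
  proof (rule nextpt_eqI)
    show "finite (g ` P)" using assoc_partitionD(1)[OF P] by simp
    show "toppt g P a \<in> insert 1 (g ` P)"
      using toppt_mem_image[OF g P a] piece_bounds(3)[OF g P a] by force
    show "betapt g P a < toppt g P a" "toppt g P a \<le> 1" using piece_bounds[OF g P a] by simp_all
    fix y assume y: "y \<in> g ` P" "betapt g P a < y"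
    show "toppt g P a \<le> y"
    proof (rule ccontr)
      assume "\<not> toppt g P a \<le> y"
      then have "y \<in> g ` part_ivl P a" using piece_image[OF g P a] y(2) by simp
      moreover have "g ` part_ivl P a \<inter> g ` P = {}"
        using piece_subset[OF g P a] assoc_partitionD(3)[OF P] PC_carrierD(3)[OF g]
        by (auto dest: inj_onD)
      ultimately show False using y(1) by blast
    qed
  qed
  then show ?thesis using piece_image[OF g P a] by simp
qed

lemma even_card_filter_xor:
  assumes "finite S"
  shows "even (card {x \<in> S. p x \<noteq> q x} + card {x \<in> S. p x} + card {x \<in> S. q x})"
  using assms
proof (induction S rule: finite_induct)
  case (insert x F)
  have "{y \<in> insert x F. r y} = (if r x then insert x {y \<in> F. r y} else {y \<in> F. r y})" for r
    by auto
  then have card_insert: "card {y \<in> insert x F. r y} = card {y \<in> F. r y} + (if r x then 1 else 0)" for r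
    using insert.hyps by simp
  show ?case using insert.IH unfolding card_insert by (cases "p x"; cases "q x") auto
qed simp

lemma mod2_regroup:
  fixes r1 r2 r3 s1 s2 :: int
  assumes "even (r1 + r2 + r3)"
  shows "(r1 + (s1 + s2) mod 2) mod 2 = ((r3 + s1) mod 2 + (r2 + s2) mod 2) mod 2"
proof -
  have "(r1 + (s1 + s2)) mod 2 = ((r3 + s1) + (r2 + s2)) mod 2"
    using assms unfolding mod_eq_dvd_iff by auto
  then show ?thesis by (simp add: mod_add_left_eq mod_add_right_eq)
qed

lemma strict_mono_on_comp_cases:
  fixes g h :: "'a::order \<Rightarrow> 'a"
  shows "strict_mono_on I g \<Longrightarrow> strict_mono_on (g ` I) h \<Longrightarrow> strict_mono_on I (h \<circ> g)"
    "strict_mono_on I g \<Longrightarrow> strict_antimono_on (g ` I) h \<Longrightarrow> strict_antimono_on I (h \<circ> g)"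
    "strict_antimono_on I g \<Longrightarrow> strict_mono_on (g ` I) h \<Longrightarrow> strict_antimono_on I (h \<circ> g)"
    "strict_antimono_on I g \<Longrightarrow> strict_antimono_on (g ` I) h \<Longrightarrow> strict_mono_on I (h \<circ> g)"
  unfolding monotone_on_def by auto

context
  fixes g h :: "real \<Rightarrow> real" and P :: "real set"
  assumes g: "g \<in> PC_carrier" and h: "h \<in> PC_carrier"
    and gP: "assoc_partition g P" and hP: "assoc_partition h (g ` P)" and hgP: "assoc_partition (h \<circ> g) P"
begin

lemma betapt_comp:
  assumes a: "a \<in> P"
  shows "betapt (h \<circ> g) P a = betapt h (g ` P) (betapt g P a)"
proof -
  have "betapt (h \<circ> g) P a = Inf (h ` g ` part_ivl P a)" unfolding betapt_def by (simp add: image_comp)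
  also have "\<dots> = betapt h (g ` P) (betapt g P a)"
    unfolding betapt_def[of h "g ` P"] part_ivl_image_betapt[OF g gP a] ..
  finally show ?thesis .
qed

lemma antimono_comp_iff:
  assumes a: "a \<in> P"
  shows "strict_antimono_on (part_ivl P a) (h \<circ> g) \<longleftrightarrow>
    strict_antimono_on (part_ivl P a) g \<noteq> strict_antimono_on (part_ivl (g ` P) (betapt g P a)) h"
proof -
  let ?I = "part_ivl P a" and ?J = "part_ivl (g ` P) (betapt g P a)"
  have J: "?J = g ` ?I" using part_ivl_image_betapt[OF g gP a] .
  have b: "betapt g P a \<in> g ` P" using betapt_mem_image[OF g gP a] .
  have excl: "strict_mono_on ?I f \<Longrightarrow> \<not> strict_antimono_on ?I f" for f :: "real \<Rightarrow> real"
    using strict_mono_on_not_antimono piece_nonempty[OF g gP a] by blast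
  have exclJ: "strict_mono_on ?J h \<Longrightarrow> \<not> strict_antimono_on ?J h"
    using strict_mono_on_not_antimono piece_nonempty[OF h hP b] by blast
  from piece_mono[OF g gP a] piece_mono[OF h hP b] show ?thesis
    unfolding J using excl exclJ[unfolded J] strict_mono_on_comp_cases[of ?I g h] by blast
qed

lemma Rcount_comp_parity: "even (Rcount (h \<circ> g) P + Rcount g P + Rcount h (g ` P))"
proof -
  let ?Ag = "\<lambda>a. strict_antimono_on (part_ivl P a) g"
  let ?Ah = "\<lambda>a. strict_antimono_on (part_ivl (g ` P) (betapt g P a)) h"
  have "{a \<in> P. strict_antimono_on (part_ivl P a) (h \<circ> g)} = {a \<in> P. ?Ag a \<noteq> ?Ah a}"
    using antimono_comp_iff by (intro Collect_cong) blast
  then have "Rcount (h \<circ> g) P = card {a \<in> P. ?Ag a \<noteq> ?Ah a}" unfolding Rcount_def by simp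
  moreover have "Rcount h (g ` P) = card {a \<in> P. ?Ah a}"
  proof -
    have "{b \<in> f ` S. A b} = f ` {a \<in> S. A (f a)}" for f :: "real \<Rightarrow> real" and S A by blast
    from this[of "betapt g P" P] have
      "{b \<in> g ` P. strict_antimono_on (part_ivl (g ` P) b) h} = betapt g P ` {a \<in> P. ?Ah a}"
      unfolding betapt_image[OF g gP] .
    moreover have "inj_on (betapt g P) {a \<in> P. ?Ah a}"
      by (rule inj_on_subset[OF betapt_inj_on[OF g gP]]) blast
    ultimately show ?thesis unfolding Rcount_def by (simp add: card_image)
  qed
  ultimately show ?thesis
    unfolding Rcount_def using even_card_filter_xor[OF assoc_partitionD(1)[OF gP], of ?Ag ?Ah] by simp
qed

lemma sigma_part_comp:
  "sigma_part (h \<circ> g) P = sigma_part h (g ` P) \<circ> map_permutation (g ` P) h (sigma_part g P)"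
proof
  fix y
  have inj: "inj_on h (g ` P)" using inj_on_partition[OF h hP] .
  show "sigma_part (h \<circ> g) P y = (sigma_part h (g ` P) \<circ> map_permutation (g ` P) h (sigma_part g P)) y"
  proof (cases "y \<in> h ` g ` P")
    case True
    then obtain a where a: "a \<in> P" "y = h (g a)" by blast
    have "map_permutation (g ` P) h (sigma_part g P) y = h (betapt g P a)"
      using map_permutation_apply[OF inj] a sigma_part_image[OF g gP a(1)] by simp
    then show ?thesis
      using a sigma_part_image[OF PC_carrier_comp[OF g h] hgP a(1)] betapt_comp[OF a(1)]
        sigma_part_image[OF h hP betapt_mem_image[OF g gP a(1)]] by simp
  next
    case False
    then show ?thesis
      by (simp add: sigma_part_outside image_comp map_permutation_def restrict_id_def)
  qed
qed

lemma eps_part_comp: "eps_part (h \<circ> g) P = (eps_part h (g ` P) + eps_part g P) mod 2"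
proof -
  have perm: "sigma_part g P permutes g ` P" using sigma_part_permutes[OF g gP] .
  have fin: "finite (g ` P)" using assoc_partitionD(1)[OF hP] .
  have inj: "inj_on h (g ` P)" using inj_on_partition[OF h hP] .
  have "permutation (map_permutation (g ` P) h (sigma_part g P))"
    using map_permutation_permutes[OF inj_on_imp_bij_betw[OF inj] perm] fin permutation_permutes by blast
  then have "sgn2 (sigma_part (h \<circ> g) P) = (sgn2 (sigma_part h (g ` P)) + sgn2 (sigma_part g P)) mod 2"
    unfolding sigma_part_comp sgn2_def
    using evenperm_comp[OF permutation_sigma_part[OF h hP]] evenperm_map_permutation[OF inj perm fin]
    by simp
  moreover have "even (int (Rcount (h \<circ> g) P) + int (Rcount g P) + int (Rcount h (g ` P)))"
    using Rcount_comp_parity by (metis even_of_nat of_nat_add)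
  ultimately show ?thesis unfolding eps_part_def using mod2_regroup by simp
qed

end

theorem epsilon_comp:
  assumes g: "g \<in> PC_carrier" and h: "h \<in> PC_carrier"
  shows "epsilon (h \<circ> g) = (epsilon h + epsilon g) mod 2"
proof -
  obtain B C where B: "assoc_partition g B" and C: "assoc_partition h C"
    using PC_carrier_assoc_partition g h by metis
  define P where "P = B \<union> (g -` C \<inter> Xint)"
  note refined = common_refinement[OF g B C, folded P_def]
  show ?thesis
    using eps_part_comp[OF g h refined] epsilon_eq_eps_part[OF PC_carrier_comp[OF g h] refined(3)]
      epsilon_eq_eps_part[OF g refined(1)] epsilon_eq_eps_part[OF h refined(2)] by simp
qed

section \<open>PC is a group\<close>

lemma PC_carrier_permutes: "h \<in> PC_carrier \<Longrightarrow> h permutes Xint"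
  using bij_imp_permutes PC_carrierD(1,2) by blast

lemma isCont_inv_off_partition:
  assumes h: "h \<in> PC_carrier" and B: "assoc_partition h B" and y: "y \<in> Xint - h ` B"
  shows "isCont (inv_into UNIV h) y"
proof -
  have perm: "h permutes Xint" using PC_carrier_permutes[OF h] .
  obtain x where x: "x \<in> Xint - B" "y = h x" using y PC_carrierD(4)[OF h] by blast
  obtain a where a: "a \<in> B" "x \<in> part_ivl B a" using part_ivl_cover assoc_partitionD(1,2)[OF B] x(1) by blast
  obtain d where d: "d > 0" "ball x d \<subseteq> part_ivl B a" using openE[OF open_greaterThanLessThan a(2)] by blast
  have near: "z \<in> Xint - B" if "\<bar>z - x\<bar> \<le> d / 2" for z
  proof -
    have "z \<in> ball x d" using that d(1) by (simp add: dist_real_def abs_minus_commute)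
    then show ?thesis using d(2) piece_subset[OF h B a(1)] by blast
  qed
  have "isCont (inv_into UNIV h) (h x)"
    by (rule isCont_inverse_function[of "d / 2"])
      (use d(1) near assoc_partitionD(4)[OF B] permutes_inverses(2)[OF perm] in auto)
  then show ?thesis using x(2) by simp
qed

lemma PC_carrier_inv:
  assumes h: "h \<in> PC_carrier"
  shows "inv_into UNIV h \<in> PC_carrier"
proof -
  have perm: "inv_into UNIV h permutes Xint" using permutes_inv[OF PC_carrier_permutes[OF h]] .
  obtain B where B: "assoc_partition h B" using PC_carrier_assoc_partition[OF h] .
  have "\<forall>y \<in> Xint - h ` B. continuous (at y within Xint) (inv_into UNIV h)"
    using isCont_inv_off_partition[OF h B] continuous_at_imp_continuous_within by blast
  moreover have "finite (h ` B)" using assoc_partitionD(1)[OF B] by simp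
  ultimately show ?thesis
    unfolding PC_carrier_def using permutes_imp_bij[OF perm] permutes_not_in[OF perm] by blast
qed

lemma PC_carrier_id: "id \<in> PC_carrier"
  unfolding PC_carrier_def by (auto intro!: exI[of _ "{}"] simp: bij_betw_def)

lemma PC_simps [simp]:
  "carrier PC = PC_carrier" "x \<otimes>\<^bsub>PC\<^esub> y = x \<circ> y" "\<one>\<^bsub>PC\<^esub> = id"
  unfolding PC_def by simp_all

lemma group_PC: "group PC"
proof (rule groupI)
  show "\<exists>y \<in> carrier PC. y \<otimes>\<^bsub>PC\<^esub> x = \<one>\<^bsub>PC\<^esub>" if "x \<in> carrier PC" for x
    using that PC_carrier_inv permutes_inv_o(2)[OF PC_carrier_permutes] by auto
qed (auto simp: PC_carrier_comp PC_carrier_id comp_assoc)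

lemma PC_inv: "h \<in> PC_carrier \<Longrightarrow> inv\<^bsub>PC\<^esub> h = inv_into UNIV h"
  using group.inv_equality[OF group_PC] PC_carrier_inv permutes_inv_o(2)[OF PC_carrier_permutes] by simp

lemma epsilon_hom: "epsilon \<in> hom PC Z2"
proof (rule homI)
  show "epsilon h \<in> carrier Z2" for h
    unfolding epsilon_def eps_part_def by (simp add: carrier_integer_mod_group)
  show "epsilon (g \<otimes>\<^bsub>PC\<^esub> h) = epsilon g \<otimes>\<^bsub>Z2\<^esub> epsilon h" if "g \<in> carrier PC" "h \<in> carrier PC" for g h
    using epsilon_comp[of h g] that by (simp add: integer_mod_group_def)
qed

section \<open>Finitely supported permutations\<close>

lemma Sfin_iff: "s \<in> Sfin \<longleftrightarrow> s permutes Xint \<and> permutation s"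
proof
  assume "s \<in> Sfin"
  then have perm: "s permutes Xint" and "finite {x. s x \<noteq> x}"
    unfolding Sfin_def using bij_imp_permutes by auto
  then show "s permutes Xint \<and> permutation s" using permutes_bij[OF perm] unfolding permutation by blast
next
  assume "s permutes Xint \<and> permutation s"
  then have perm: "s permutes Xint" and "finite {x. s x \<noteq> x}" unfolding permutation by blast+
  then show "s \<in> Sfin"
    unfolding Sfin_def using permutes_imp_bij[OF perm] permutes_not_in[OF perm] by blast
qed

lemma isCont_eq_id_off_finite:
  fixes s :: "real \<Rightarrow> real"
  assumes "finite F" "\<And>y. y \<notin> F \<Longrightarrow> s y = y" "x \<notin> F"
  shows "isCont s x"
proof -
  have "eventually (\<lambda>y. y \<in> - F) (nhds x)"
    using eventually_nhds_in_open[OF open_Compl[OF finite_imp_closed[OF assms(1)]]] assms(3) by simp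
  then have "eventually (\<lambda>y. s y = id y) (nhds x)" by eventually_elim (use assms(2) in simp)
  then show ?thesis using isCont_cong[of s id x] by simp
qed

lemma Sfin_subset_PC: "Sfin \<subseteq> PC_carrier"
proof
  fix s assume "s \<in> Sfin"
  then have perm: "s permutes Xint" and fin: "finite {x. s x \<noteq> x}"
    unfolding Sfin_iff permutation by blast+
  have "\<forall>x \<in> Xint - {x. s x \<noteq> x}. continuous (at x within Xint) s"
    using isCont_eq_id_off_finite[OF fin] continuous_at_imp_continuous_within by blast
  then show "s \<in> PC_carrier"
    unfolding PC_carrier_def using permutes_imp_bij[OF perm] permutes_not_in[OF perm] fin by blast
qed

lemma subgroup_Sfin: "subgroup Sfin PC"
proof (rule group.subgroupI[OF group_PC])
  show "Sfin \<subseteq> carrier PC" using Sfin_subset_PC by simp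
  have "id \<in> Sfin" unfolding Sfin_iff by simp
  then show "Sfin \<noteq> {}" by blast
  show "inv\<^bsub>PC\<^esub> s \<in> Sfin" if s: "s \<in> Sfin" for s
  proof -
    have "s permutes Xint" "permutation s" using s unfolding Sfin_iff by blast+
    then have "inv_into UNIV s \<in> Sfin" unfolding Sfin_iff using permutes_inv permutation_inverse by blast
    then show ?thesis using PC_inv s Sfin_subset_PC by auto
  qed
  show "s \<otimes>\<^bsub>PC\<^esub> t \<in> Sfin" if "s \<in> Sfin" "t \<in> Sfin" for s t
    using that permutes_compose permutation_compose unfolding Sfin_iff PC_simps by blast
qed

lemma permutation_conjugate:
  assumes "bij g" "permutation s"
  shows "permutation (g \<circ> s \<circ> inv_into UNIV g)"
proof -
  have "{x. (g \<circ> s \<circ> inv_into UNIV g) x \<noteq> x} \<subseteq> g ` {y. s y \<noteq> y}"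
  proof
    fix x assume x: "x \<in> {x. (g \<circ> s \<circ> inv_into UNIV g) x \<noteq> x}"
    have "x = g (inv_into UNIV g x)" using bij_inv_eq_iff[OF assms(1)] by metis
    with x show "x \<in> g ` {y. s y \<noteq> y}" by (metis (mono_tags) comp_apply image_eqI mem_Collect_eq)
  qed
  moreover have "finite (g ` {y. s y \<noteq> y})" using assms(2) unfolding permutation by simp
  ultimately have "finite {x. (g \<circ> s \<circ> inv_into UNIV g) x \<noteq> x}" by (rule finite_subset)
  moreover have "bij s" using assms(2) unfolding permutation by blast
  then have "bij (g \<circ> s \<circ> inv_into UNIV g)"
    using bij_comp[OF bij_imp_bij_inv[OF assms(1)] bij_comp[OF _ assms(1)]] by blast
  ultimately show ?thesis unfolding permutation by (intro conjI)
qed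

lemma normal_Sfin: "Sfin \<lhd> PC"
  unfolding group.normal_inv_iff[OF group_PC]
proof (intro conjI ballI subgroup_Sfin)
  fix g s assume g: "g \<in> carrier PC" and s: "s \<in> Sfin"
  have perm: "g permutes Xint" using PC_carrier_permutes g by simp
  have "s permutes Xint" "permutation s" using s unfolding Sfin_iff by blast+
  then have "g \<circ> s \<circ> inv_into UNIV g \<in> Sfin"
    using permutes_compose[OF permutes_inv[OF perm] permutes_compose[OF _ perm]]
      permutation_conjugate[OF permutes_bij[OF perm]] unfolding Sfin_iff by blast
  then show "g \<otimes>\<^bsub>PC\<^esub> s \<otimes>\<^bsub>PC\<^esub> inv\<^bsub>PC\<^esub> g \<in> Sfin" using g PC_inv by simp
qed

lemma transpose_Sfin: "a \<in> Xint \<Longrightarrow> b \<in> Xint \<Longrightarrow> Transposition.transpose a b \<in> Sfin"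
  unfolding Sfin_iff by (simp add: permutes_swap_id permutation_swap_id)

context
  fixes s :: "real \<Rightarrow> real"
  assumes s: "s \<in> Sfin"
begin

lemma assoc_partition_support: "assoc_partition s (insert 0 {x. s x \<noteq> x})"
proof -
  have perm: "s permutes Xint" and fin: "finite {x. s x \<noteq> x}" using s unfolding Sfin_iff permutation by blast+
  have "{x. s x \<noteq> x} \<subseteq> Xint" using permutes_not_in[OF perm] by blast
  then have "insert 0 {x. s x \<noteq> x} \<subseteq> Xint" by (simp add: Xint_def)
  then show ?thesis unfolding assoc_partition_iff using isCont_eq_id_off_finite[OF fin] fin by auto
qed

lemma Rcount_support: "Rcount s (insert 0 {x. s x \<noteq> x}) = 0"
proof -
  let ?B = "insert 0 {x. s x \<noteq> x}"
  have hs: "s \<in> PC_carrier" and B: "assoc_partition s ?B" using s Sfin_subset_PC assoc_partition_support by blast+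
  have "strict_mono_on (part_ivl ?B a) s" if "a \<in> ?B" for a
  proof -
    have "s x = x" if "x \<in> part_ivl ?B a" for x using piece_subset[OF hs B \<open>a \<in> ?B\<close>] that by blast
    then show ?thesis unfolding monotone_on_def by auto
  qed
  then have "\<not> strict_antimono_on (part_ivl ?B a) s" if "a \<in> ?B" for a
    using strict_mono_on_not_antimono piece_nonempty[OF hs B that] that by blast
  then have no_antimono: "{a \<in> ?B. strict_antimono_on (part_ivl ?B a) s} = {}" by blast
  show ?thesis unfolding Rcount_def no_antimono by simp
qed

lemma sigma_part_support: "sigma_part s (insert 0 {x. s x \<noteq> x}) = inv_into UNIV s"
proof
  fix y
  let ?B = "insert 0 {x. s x \<noteq> x}"
  have hs: "s \<in> PC_carrier" and B: "assoc_partition s ?B" using s Sfin_subset_PC assoc_partition_support by blast+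
  have "s permutes Xint" using s unfolding Sfin_iff by blast
  then have sB: "s permutes ?B" by (rule permutes_superset) auto
  have betapt: "betapt s ?B a = a" if "a \<in> ?B" for a
  proof -
    have "s x = id x" if "x \<in> part_ivl ?B a" for x using piece_subset[OF hs B \<open>a \<in> ?B\<close>] that by auto
    then have "s ` part_ivl ?B a = id ` part_ivl ?B a" by (intro image_cong) simp_all
    then show ?thesis using piece_nonempty[OF hs B that] unfolding betapt_def by simp
  qed
  show "sigma_part s ?B y = inv_into UNIV s y"
  proof (cases "y \<in> ?B")
    case True
    then have z: "inv_into UNIV s y \<in> ?B" "s (inv_into UNIV s y) = y"
      using permutes_in_image[OF permutes_inv[OF sB]] permutes_inverses(1)[OF sB] by auto
    show ?thesis using sigma_part_image[OF hs B z(1)] betapt[OF z(1)] unfolding z(2) by simp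
  next
    case False
    then have "inv_into UNIV s y = y" using permutes_inv_eq[OF sB] by blast
    moreover have "sigma_part s ?B y = y" using False permutes_image[OF sB] sigma_part_outside by metis
    ultimately show ?thesis by simp
  qed
qed

lemma epsilon_Sfin: "epsilon s = sgn2 s"
proof -
  have "s \<in> PC_carrier" using s Sfin_subset_PC by blast
  moreover have "evenperm (inv_into UNIV s) = evenperm s" using s evenperm_inv unfolding Sfin_iff by blast
  ultimately show ?thesis
    using epsilon_eq_eps_part[OF _ assoc_partition_support]
    unfolding eps_part_def sgn2_def Rcount_support sigma_part_support by simp
qed

end

lemma transpose_comp_transpose_derived:
  assumes Gh: "Sfin \<subseteq> Gh"
    and X: "a \<in> Xint" "b \<in> Xint" "c \<in> Xint" "d \<in> Xint" "a \<noteq> b" "c \<noteq> d"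
  shows "Transposition.transpose a b \<circ> Transposition.transpose c d \<in> derived PC Gh"
proof -
  let ?t = "Transposition.transpose a b"
  define k where "k = Transposition.transpose (Transposition.transpose a c b) d \<circ> Transposition.transpose a c"
  have k: "k a = c" "k b = d" using X(5,6) unfolding k_def by (auto simp: Transposition.transpose_def)
  have "Transposition.transpose a c b \<in> Xint" using X by (simp add: Transposition.transpose_def)
  then have kS: "k \<in> Sfin" and tS: "?t \<in> Sfin"
    unfolding k_def using subgroup.m_closed[OF subgroup_Sfin] transpose_Sfin X by simp_all
  then have kPC: "k \<in> PC_carrier" and tPC: "?t \<in> PC_carrier" using Sfin_subset_PC by blast+
  have "?t \<otimes>\<^bsub>PC\<^esub> k \<otimes>\<^bsub>PC\<^esub> inv\<^bsub>PC\<^esub> ?t \<otimes>\<^bsub>PC\<^esub> inv\<^bsub>PC\<^esub> k \<in> derived PC Gh"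
    unfolding derived_def using kS tS Gh by (blast intro: generate.incl)
  moreover have "?t \<otimes>\<^bsub>PC\<^esub> k \<otimes>\<^bsub>PC\<^esub> inv\<^bsub>PC\<^esub> ?t \<otimes>\<^bsub>PC\<^esub> inv\<^bsub>PC\<^esub> k
      = ?t \<circ> (k \<circ> ?t \<circ> inv_into UNIV k)"
    using PC_inv[OF kPC] PC_inv[OF tPC] by (simp add: comp_assoc)
  moreover have "k \<circ> ?t \<circ> inv_into UNIV k = Transposition.transpose c d"
  proof -
    have perm: "k permutes Xint" using kS unfolding Sfin_iff by blast
    have "Transposition.transpose c d \<circ> k = k \<circ> ?t"
      using transpose_comp_eq[OF permutes_bij[OF perm], of c d] k permutes_inverses(2)[OF perm] by metis
    then show ?thesis using permutes_inv_o(1)[OF perm] by (metis comp_assoc comp_id)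
  qed
  ultimately show ?thesis by simp
qed

text \<open>An even permutation is a product of pairs of transpositions, and the product of two
  transpositions is a commutator in \<open>Sfin\<close>. The induction carries along the odd case,
  corrected by the fixed transposition of \<open>0\<close> and \<open>1/2\<close>.\<close>

lemma permutes_parity_derived:
  assumes Gh: "subgroup Gh PC" "Sfin \<subseteq> Gh" and p: "p permutes S" "finite S" and S: "S \<subseteq> Xint"
  defines "t0 \<equiv> Transposition.transpose (0::real) (1/2)"
  shows "(evenperm p \<longrightarrow> p \<in> derived PC Gh) \<and> (\<not> evenperm p \<longrightarrow> t0 \<circ> p \<in> derived PC Gh)"
proof -
  let ?D = "derived PC Gh"
  have D: "subgroup ?D PC" using group.derived_is_subgroup[OF group_PC subgroup.subset[OF Gh(1)]] .
  have mult: "x \<circ> y \<in> ?D" if "x \<in> ?D" "y \<in> ?D" for x y using subgroup.m_closed[OF D that] by simp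
  from p show ?thesis
  proof (induction rule: permutes_induct)
    case id
    then show ?case using subgroup.one_closed[OF D] by (simp add: id_def)
  next
    case (swap a b p)
    have "permutation p" using swap.hyps(4) p(2) permutation_permutes by blast
    then have ev: "evenperm (Transposition.transpose a b \<circ> p) \<longleftrightarrow> \<not> evenperm p"
      using evenperm_comp[OF permutation_swap_id, of p a b] evenperm_swap[of a b] swap.hyps(3) by simp
    have "a \<in> Xint" "b \<in> Xint" "(0::real) \<in> Xint" "(1/2::real) \<in> Xint" "(0::real) \<noteq> 1/2"
      using swap.hyps(1,2) S by (auto simp: Xint_def)
    then have t0ab: "t0 \<circ> Transposition.transpose a b \<in> ?D" "Transposition.transpose a b \<circ> t0 \<in> ?D"
      unfolding t0_def using transpose_comp_transpose_derived[OF Gh(2)] swap.hyps(3) by blast+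
    show ?case
    proof (cases "evenperm p")
      case True
      then have "t0 \<circ> (Transposition.transpose a b \<circ> p) \<in> ?D"
        using mult[OF t0ab(1)] swap.IH by (simp only: comp_assoc)
      then show ?thesis using ev True by blast
    next
      case False
      have "(Transposition.transpose a b \<circ> t0) \<circ> (t0 \<circ> p) \<in> ?D"
        using mult[OF t0ab(2)] swap.IH False by blast
      moreover have "(Transposition.transpose a b \<circ> t0) \<circ> (t0 \<circ> p) = Transposition.transpose a b \<circ> p"
        by (simp add: fun_eq_iff t0_def)
      ultimately have "Transposition.transpose a b \<circ> p \<in> ?D" by simp
      then show ?thesis using ev False by blast
    qed
  qed
qed

lemma evenperm_Sfin_derived:
  assumes Gh: "subgroup Gh PC" "Sfin \<subseteq> Gh" and s: "s \<in> Sfin" "evenperm s"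
  shows "s \<in> derived PC Gh"
proof -
  have sX: "s permutes Xint" and fin: "finite {x. s x \<noteq> x}"
    using s(1) unfolding Sfin_iff permutation by blast+
  have "s permutes {x. s x \<noteq> x}" by (rule permutes_superset[OF sX]) simp
  moreover have "{x. s x \<noteq> x} \<subseteq> Xint" using permutes_not_in[OF sX] by blast
  ultimately show ?thesis using permutes_parity_derived[OF Gh _ fin] s(2) by blast
qed

section \<open>Extensions by a sign character\<close>

lemma (in group_hom) image_kernel_rcos:
  assumes "g \<in> carrier G"
  shows "h ` (kernel G H h #> g) = {h g}"
  using assms by (auto simp add: kernel_def r_coset_def intro!: imageI)

lemma carrier_Z2: "carrier Z2 = {0, 1}"
  by (auto simp: carrier_integer_mod_group)

text \<open>\<open>H\<close>, \<open>N\<close>, \<open>sgn\<close> and \<open>Gh\<close> play the roles of \<open>hat PC\<close>, \<open>Sfin\<close>, \<open>\<epsilon>\<close> and \<open>hat G\<close>;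
  \<open>G_img\<close> below is \<open>G\<close> and \<open>hat_DG\<close> is \<open>hat D(G)\<close>.\<close>

locale sign_extension =
  fixes H :: "('a, 'b) monoid_scheme" (structure)
    and N :: "'a set" and sgn :: "'a \<Rightarrow> int" and Gh :: "'a set"
  assumes normal_N: "N \<lhd> H"
    and sgn_hom: "sgn \<in> hom H Z2"
    and subgroup_Gh: "subgroup Gh H"
    and N_subset_Gh: "N \<subseteq> Gh"
    and odd_in_N: "\<exists>t \<in> N. sgn t = 1"
    and even_N_derived: "{s \<in> N. sgn s = 0} \<subseteq> derived H Gh"
begin

abbreviation proj :: "'a \<Rightarrow> 'a set" where
  "proj \<equiv> \<lambda>g. N #> g"

abbreviation G_img :: "'a set monoid" where
  "G_img \<equiv> (H Mod N)\<lparr>carrier := proj ` Gh\<rparr>"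

abbreviation hat_DG :: "'a set" where
  "hat_DG \<equiv> {g \<in> carrier H. proj g \<in> derived G_img (carrier G_img)}"

lemma group_H: "group H"
  using normal_N by (simp add: normal_def)

lemma group_hom_sgn: "group_hom H Z2 sgn"
  using group_H sgn_hom by (simp add: group_hom_def group_hom_axioms_def)

lemma group_hom_proj: "group_hom H (H Mod N) proj"
  using group_H normal.factorgroup_is_group[OF normal_N] normal.r_coset_hom_Mod[OF normal_N]
  by (simp add: group_hom_def group_hom_axioms_def)

lemma Gh_carrier: "Gh \<subseteq> carrier H"
  using subgroup_Gh subgroup.subset by blast

lemma group_G_img: "group G_img"
  using subgroup.subgroup_is_group[OF group_hom.subgroup_img_is_subgroup[OF group_hom_proj subgroup_Gh]]
    normal.factorgroup_is_group[OF normal_N] by blast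

lemma derived_Ghat: "derived (H\<lparr>carrier := Gh\<rparr>) Gh = derived H Gh"
  using group.derived_consistent[OF group_H _ subgroup_Gh] by simp

lemma derived_G_img: "derived G_img (carrier G_img) = proj ` derived H Gh"
proof -
  have "derived G_img (carrier G_img) = derived (H Mod N) (proj ` Gh)"
    using group.derived_consistent[OF normal.factorgroup_is_group[OF normal_N] _
        group_hom.subgroup_img_is_subgroup[OF group_hom_proj subgroup_Gh]] by simp
  also have "\<dots> = proj ` derived H Gh" using group_hom.derived_img[OF group_hom_proj Gh_carrier] .
  finally show ?thesis .
qed

lemma subgroup_derived: "subgroup (derived H Gh) H"
  using group.derived_is_subgroup[OF group_H Gh_carrier] .

lemma derived_subset_Gh: "derived H Gh \<subseteq> Gh"
  using group.derived_incl[OF group_H subset_refl subgroup_Gh] .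

text \<open>A homomorphism into an abelian group kills commutators.\<close>

lemma sgn_derived: "g \<in> derived H Gh \<Longrightarrow> sgn g = 0"
proof -
  have "sgn ` derived H Gh = derived Z2 (sgn ` Gh)"
    using group_hom.derived_img[OF group_hom_sgn Gh_carrier] by simp
  also have "\<dots> = {\<one>\<^bsub>Z2\<^esub>}"
    using group_hom.hom_closed[OF group_hom_sgn] Gh_carrier
    by (intro comm_group.derived_eq_singleton[OF abelian_integer_mod_group]) blast
  also have "\<dots> = {0}" by simp
  finally show "g \<in> derived H Gh \<Longrightarrow> sgn g = 0" by blast
qed

lemma proj_eqD:
  assumes "x \<in> carrier H" "c \<in> carrier H" "proj x = proj c"
  obtains s where "s \<in> N" "x = s \<otimes> c"
proof -
  have "x \<in> N #> c" using group.rcos_self[OF group_H assms(1) normal_imp_subgroup[OF normal_N]] assms(3) by simp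
  then show thesis using that unfolding r_coset_def by blast
qed

theorem derived_eq_kernel_inter: "derived H Gh = {h \<in> carrier H. sgn h = 0} \<inter> hat_DG"
proof
  show "derived H Gh \<subseteq> {h \<in> carrier H. sgn h = 0} \<inter> hat_DG"
  proof
    fix x assume x: "x \<in> derived H Gh"
    then have "x \<in> carrier H" using derived_subset_Gh Gh_carrier by blast
    moreover have "proj x \<in> derived G_img (carrier G_img)" unfolding derived_G_img using x by (rule imageI)
    ultimately show "x \<in> {h \<in> carrier H. sgn h = 0} \<inter> hat_DG" using sgn_derived[OF x] by blast
  qed
  show "{h \<in> carrier H. sgn h = 0} \<inter> hat_DG \<subseteq> derived H Gh"
  proof
    fix x assume x: "x \<in> {h \<in> carrier H. sgn h = 0} \<inter> hat_DG"
    then have "proj x \<in> proj ` derived H Gh" unfolding derived_G_img by blast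
    then obtain c where c: "c \<in> derived H Gh" "proj x = proj c" by (elim imageE)
    have cH: "c \<in> carrier H" using c(1) derived_subset_Gh Gh_carrier by blast
    have xH: "x \<in> carrier H" using x by blast
    obtain s where s: "s \<in> N" "x = s \<otimes> c" using proj_eqD[OF xH cH c(2)] .
    have sH: "s \<in> carrier H" using subgroup.mem_carrier[OF normal_imp_subgroup[OF normal_N] s(1)] .
    have "sgn x = (sgn s + sgn c) mod 2"
      using group_hom.hom_mult[OF group_hom_sgn sH cH] s(2) by simp
    moreover have "sgn x = 0" "sgn c = 0" using x sgn_derived[OF c(1)] by blast+
    moreover have "sgn s \<in> {0, 1}"
      using group_hom.hom_closed[OF group_hom_sgn sH] carrier_Z2 by simp
    ultimately have "sgn s = 0" by auto
    then have "s \<in> derived H Gh" using even_N_derived s(1) by blast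
    then show "x \<in> derived H Gh" using subgroup.m_closed[OF subgroup_derived _ c(1)] s(2) by simp
  qed
qed

lemma subgroup_N: "subgroup N H"
  using normal_imp_subgroup[OF normal_N] .

lemma N_carrier: "N \<subseteq> carrier H"
  using subgroup.subset[OF subgroup_N] .

lemma proj_mult_N:
  assumes "x \<in> carrier H" "s \<in> N"
  shows "proj (x \<otimes> s) = proj x"
proof -
  have "proj (x \<otimes> s) = proj x \<otimes>\<^bsub>H Mod N\<^esub> proj s"
    using group_hom.hom_mult[OF group_hom_proj assms(1)] N_carrier assms(2) by blast
  also have "proj s = \<one>\<^bsub>H Mod N\<^esub>"
    using subgroup.rcos_const[OF subgroup_N group_H assms(2)] by (simp add: FactGroup_def)
  finally show ?thesis
    using monoid.r_one[OF group.is_monoid[OF normal.factorgroup_is_group[OF normal_N]]]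
      group_hom.hom_closed[OF group_hom_proj assms(1)] by simp
qed

lemma N_subset_hat_DG: "N \<subseteq> hat_DG"
proof
  fix s assume s: "s \<in> N"
  have "proj s = \<one>\<^bsub>G_img\<^esub>"
    using subgroup.rcos_const[OF subgroup_N group_H s] by (simp add: FactGroup_def)
  then show "s \<in> hat_DG"
    using subgroup.one_closed[OF group.derived_is_subgroup[OF group_G_img subset_refl]] N_carrier s by auto
qed

lemma sgn_in_Z2: "x \<in> carrier H \<Longrightarrow> sgn x = 0 \<or> sgn x = 1"
  using group_hom.hom_closed[OF group_hom_sgn] carrier_Z2 by blast

lemma sgn_mult: "x \<in> carrier H \<Longrightarrow> y \<in> carrier H \<Longrightarrow> sgn (x \<otimes> y) = (sgn x + sgn y) mod 2"
  using group_hom.hom_mult[OF group_hom_sgn] by simp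

lemma odd_hat_DG_rcos:
  assumes t: "t \<in> N" "sgn t = 1" and a: "a \<in> hat_DG" "sgn a = 1"
  shows "a \<in> derived H Gh #> t"
proof -
  have tH: "t \<in> carrier H" "inv t \<in> N" "inv t \<in> carrier H"
    using t(1) N_carrier subgroup.m_inv_closed[OF subgroup_N] by auto
  have aH: "a \<in> carrier H" using a(1) by blast
  define b where "b = a \<otimes> inv t"
  interpret H: group H by (rule group_H)
  have bH: "b \<in> carrier H" using aH tH unfolding b_def by simp
  have ab: "a = b \<otimes> t" using aH tH unfolding b_def by (simp add: H.m_assoc)
  have "sgn b = 0" using sgn_mult[OF bH tH(1)] ab a(2) t(2) sgn_in_Z2[OF bH] by auto
  moreover have "proj b = proj a" unfolding b_def using proj_mult_N[OF aH tH(2)] .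
  ultimately have "b \<in> derived H Gh" using derived_eq_kernel_inter a(1) bH by auto
  then show ?thesis using ab unfolding r_coset_def by blast
qed

theorem card_rcosets_derived: "card (rcosets\<^bsub>H\<lparr>carrier := hat_DG\<rparr>\<^esub> (derived H Gh)) = 2"
proof -
  obtain t where t: "t \<in> N" "sgn t = 1" using odd_in_N by blast
  have tH: "t \<in> carrier H" using t(1) N_carrier by blast
  let ?D = "derived H Gh"
  have cosets: "rcosets\<^bsub>H\<lparr>carrier := hat_DG\<rparr>\<^esub> ?D = (\<lambda>a. ?D #> a) ` hat_DG"
    unfolding RCOSETS_def r_coset_def by auto
  have "?D #> a \<in> {?D, ?D #> t}" if a: "a \<in> hat_DG" for a
  proof (cases "sgn a = 0")
    case True
    then have "a \<in> ?D" using derived_eq_kernel_inter a by blast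
    then show ?thesis using subgroup.rcos_const[OF subgroup_derived group_H] by simp
  next
    case False
    then have "a \<in> ?D #> t" using odd_hat_DG_rcos[OF t a] sgn_in_Z2 a by blast
    then show ?thesis using group.repr_independence[OF group_H _ tH subgroup_derived] by simp
  qed
  moreover have "?D = ?D #> \<one>" using group.coset_mult_one[OF group_H] subgroup.subset[OF subgroup_derived] by simp
  moreover have "\<one> \<in> hat_DG" "t \<in> hat_DG"
    using N_subset_hat_DG t(1) subgroup.one_closed[OF subgroup_N] by auto
  ultimately have "rcosets\<^bsub>H\<lparr>carrier := hat_DG\<rparr>\<^esub> ?D = {?D, ?D #> t}"
    unfolding cosets by blast
  moreover have "t \<in> ?D #> t" "t \<notin> ?D"
    using group.rcos_self[OF group_H tH subgroup_derived] sgn_derived t(2) by auto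
  ultimately show ?thesis by (metis card_2_iff)
qed

abbreviation abel_sign :: "'a \<Rightarrow> 'a set set \<times> int" where
  "abel_sign g \<equiv> (derived G_img (carrier G_img) #>\<^bsub>G_img\<^esub> proj g, sgn g)"

lemma group_target: "group ((G_img Mod derived G_img (carrier G_img)) \<times>\<times> Z2)"
  using DirProd_group[OF normal.factorgroup_is_group[OF group.derived_self_is_normal[OF group_G_img]]
      group_integer_mod_group] .

lemma abel_sign_hom: "abel_sign \<in> hom (H\<lparr>carrier := Gh\<rparr>) ((G_img Mod derived G_img (carrier G_img)) \<times>\<times> Z2)"
proof (rule homI)
  fix g assume "g \<in> carrier (H\<lparr>carrier := Gh\<rparr>)"
  then have g: "g \<in> Gh" by simp
  then show "abel_sign g \<in> carrier ((G_img Mod derived G_img (carrier G_img)) \<times>\<times> Z2)"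
    using group_hom.hom_closed[OF group_hom_sgn] Gh_carrier
    by (auto simp: FactGroup_def RCOSETS_def)
next
  fix g h assume "g \<in> carrier (H\<lparr>carrier := Gh\<rparr>)" "h \<in> carrier (H\<lparr>carrier := Gh\<rparr>)"
  then have g: "g \<in> Gh" and h: "h \<in> Gh" by simp_all
  then have gh: "g \<in> carrier H" "h \<in> carrier H" using Gh_carrier by blast+
  have "proj (g \<otimes> h) = proj g \<otimes>\<^bsub>G_img\<^esub> proj h"
    using group_hom.hom_mult[OF group_hom_proj gh] by simp
  then have "derived G_img (carrier G_img) #>\<^bsub>G_img\<^esub> proj (g \<otimes> h) =
      (derived G_img (carrier G_img) #>\<^bsub>G_img\<^esub> proj g) \<otimes>\<^bsub>G_img Mod derived G_img (carrier G_img)\<^esub>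
      (derived G_img (carrier G_img) #>\<^bsub>G_img\<^esub> proj h)"
    using normal.rcos_sum[OF group.derived_self_is_normal[OF group_G_img]] g h by (simp add: FactGroup_def)
  then show "abel_sign (g \<otimes>\<^bsub>H\<lparr>carrier := Gh\<rparr>\<^esub> h) =
      abel_sign g \<otimes>\<^bsub>(G_img Mod derived G_img (carrier G_img)) \<times>\<times> Z2\<^esub> abel_sign h"
    using sgn_mult[OF gh] by simp
qed

lemma abel_sign_surj:
  "abel_sign ` carrier (H\<lparr>carrier := Gh\<rparr>) = carrier ((G_img Mod derived G_img (carrier G_img)) \<times>\<times> Z2)"
proof
  show "abel_sign ` carrier (H\<lparr>carrier := Gh\<rparr>) \<subseteq> carrier ((G_img Mod derived G_img (carrier G_img)) \<times>\<times> Z2)"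
    using abel_sign_hom by (auto simp: hom_def)
  show "carrier ((G_img Mod derived G_img (carrier G_img)) \<times>\<times> Z2) \<subseteq> abel_sign ` carrier (H\<lparr>carrier := Gh\<rparr>)"
  proof
    fix z assume "z \<in> carrier ((G_img Mod derived G_img (carrier G_img)) \<times>\<times> Z2)"
    then obtain g e where z: "z = (derived G_img (carrier G_img) #>\<^bsub>G_img\<^esub> proj g, e)" "g \<in> Gh" "e \<in> {0, 1}"
      using carrier_Z2 by (auto simp: FactGroup_def RCOSETS_def)
    obtain t where t: "t \<in> N" "sgn t = 1" using odd_in_N by blast
    have gH: "g \<in> carrier H" and tH: "t \<in> carrier H" using z(2) t(1) Gh_carrier N_carrier by blast+
    show "z \<in> abel_sign ` carrier (H\<lparr>carrier := Gh\<rparr>)"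
    proof (cases "sgn g = e")
      case True
      then have "z = abel_sign g" using z(1) by simp
      then show ?thesis using z(2) by (intro image_eqI[of z abel_sign g]) simp_all
    next
      case False
      have "g \<otimes> t \<in> Gh" using subgroup.m_closed[OF subgroup_Gh z(2)] t(1) N_subset_Gh by blast
      moreover have "sgn (g \<otimes> t) = e" using sgn_mult[OF gH tH] t(2) False z(3) sgn_in_Z2[OF gH] by auto
      then have "z = abel_sign (g \<otimes> t)" using z(1) proj_mult_N[OF gH t(1)] by simp
      ultimately show ?thesis by (intro image_eqI[of z abel_sign "g \<otimes> t"]) simp_all
    qed
  qed
qed

lemma kernel_abel_sign:
  "kernel (H\<lparr>carrier := Gh\<rparr>) ((G_img Mod derived G_img (carrier G_img)) \<times>\<times> Z2) abel_sign = derived H Gh"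
proof -
  let ?DG = "derived G_img (carrier G_img)"
  have sub: "subgroup ?DG G_img" using group.derived_is_subgroup[OF group_G_img subset_refl] .
  have "?DG #>\<^bsub>G_img\<^esub> proj g = ?DG \<longleftrightarrow> proj g \<in> ?DG" if "g \<in> Gh" for g
    using group.rcos_self[OF group_G_img _ sub, of "proj g"] subgroup.rcos_const[OF sub group_G_img, of "proj g"]
      that by auto
  then have "kernel (H\<lparr>carrier := Gh\<rparr>) ((G_img Mod ?DG) \<times>\<times> Z2) abel_sign = {g \<in> Gh. proj g \<in> ?DG \<and> sgn g = 0}"
    unfolding kernel_def by (auto simp: FactGroup_def)
  also have "\<dots> = derived H Gh"
    using derived_eq_kernel_inter derived_subset_Gh Gh_carrier by blast
  finally show ?thesis .
qed

theorem abelianization_iso: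
  "\<exists>\<phi>. \<phi> \<in> iso (H\<lparr>carrier := Gh\<rparr> Mod derived (H\<lparr>carrier := Gh\<rparr>) Gh)
        ((G_img Mod derived G_img (carrier G_img)) \<times>\<times> Z2) \<and>
     (\<forall>g \<in> Gh. fst (\<phi> (derived (H\<lparr>carrier := Gh\<rparr>) Gh #>\<^bsub>H\<lparr>carrier := Gh\<rparr>\<^esub> g))
        = derived G_img (carrier G_img) #>\<^bsub>G_img\<^esub> proj g)"
proof (intro exI conjI ballI)
  have hom: "group_hom (H\<lparr>carrier := Gh\<rparr>) ((G_img Mod derived G_img (carrier G_img)) \<times>\<times> Z2) abel_sign"
    using subgroup.subgroup_is_group[OF subgroup_Gh group_H] group_target abel_sign_hom
    by (simp add: group_hom_def group_hom_axioms_def)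
  show "(\<lambda>C. the_elem (abel_sign ` C)) \<in> iso (H\<lparr>carrier := Gh\<rparr> Mod derived (H\<lparr>carrier := Gh\<rparr>) Gh)
      ((G_img Mod derived G_img (carrier G_img)) \<times>\<times> Z2)"
    using group_hom.FactGroup_iso_set[OF hom abel_sign_surj] unfolding kernel_abel_sign derived_Ghat .
  fix g assume "g \<in> Gh"
  then show "fst (the_elem (abel_sign ` (derived (H\<lparr>carrier := Gh\<rparr>) Gh #>\<^bsub>H\<lparr>carrier := Gh\<rparr>\<^esub> g)))
      = derived G_img (carrier G_img) #>\<^bsub>G_img\<^esub> proj g"
    using group_hom.image_kernel_rcos[OF hom] unfolding kernel_abel_sign derived_Ghat by simp
qed

theorem perfect_imp_iso_Z2:
  assumes "derived G_img (carrier G_img) = carrier G_img"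
  shows "H\<lparr>carrier := Gh\<rparr> Mod derived (H\<lparr>carrier := Gh\<rparr>) Gh \<cong> Z2"
proof -
  have hom: "group_hom (H\<lparr>carrier := Gh\<rparr>) Z2 sgn"
    using subgroup.subgroup_is_group[OF subgroup_Gh group_H] sgn_hom Gh_carrier
    by (auto simp: group_hom_def group_hom_axioms_def hom_def)
  obtain t where t: "t \<in> N" "sgn t = 1" using odd_in_N by blast
  have "sgn \<one> = 0" using group_hom.hom_one[OF group_hom_sgn] by simp
  then have "0 \<in> sgn ` Gh" using subgroup.one_closed[OF subgroup_Gh] by (metis image_eqI)
  moreover have "1 \<in> sgn ` Gh" using t N_subset_Gh by (metis image_eqI subsetD)
  moreover have "sgn ` Gh \<subseteq> carrier Z2" using group_hom.hom_closed[OF group_hom_sgn] Gh_carrier by blast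
  ultimately have "sgn ` Gh = carrier Z2" unfolding carrier_Z2 by blast
  moreover have "kernel (H\<lparr>carrier := Gh\<rparr>) Z2 sgn = derived H Gh"
    using derived_eq_kernel_inter assms derived_subset_Gh Gh_carrier unfolding kernel_def by auto
  ultimately show ?thesis
    using group_hom.FactGroup_iso[OF hom] unfolding derived_Ghat by simp
qed

end

lemma sign_extension_PC:
  assumes "subgroup Gh PC" "Sfin \<subseteq> Gh"
  shows "sign_extension PC Sfin epsilon Gh"
proof (rule sign_extension.intro)
  show "Sfin \<lhd> PC" by (rule normal_Sfin)
  show "epsilon \<in> hom PC Z2" by (rule epsilon_hom)
  show "subgroup Gh PC" by (fact assms(1))
  show "Sfin \<subseteq> Gh" by (fact assms(2))
  have "Transposition.transpose 0 (1/2) \<in> Sfin" by (rule transpose_Sfin) (simp_all add: Xint_def)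
  moreover have "\<not> evenperm (Transposition.transpose (0::real) (1/2))" by (simp add: evenperm_swap)
  ultimately show "\<exists>t \<in> Sfin. epsilon t = 1" using epsilon_Sfin sgn2_def by metis
  show "{s \<in> Sfin. epsilon s = 0} \<subseteq> derived PC Gh"
    using epsilon_Sfin evenperm_Sfin_derived[OF assms] by (auto simp: sgn2_def split: if_splits)
qed

theorem corollary4p2:
  fixes Gh :: "(real \<Rightarrow> real) set"
  assumes "subgroup Gh PC" and "Sfin \<subseteq> Gh"
  defines "Ghat \<equiv> PC\<lparr>carrier := Gh\<rparr>"
      and "G \<equiv> image_grp Gh"
      and "DGhat \<equiv> hat_derived Gh"
  shows "(\<exists>\<phi>. \<phi> \<in> iso (Ghat Mod derived Ghat Gh) ((G Mod derived G (carrier G)) \<times>\<times> Z2) \<and>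
            (\<forall>g \<in> Gh. fst (\<phi> (derived Ghat Gh #>\<^bsub>Ghat\<^esub> g))
                       = derived G (carrier G) #>\<^bsub>G\<^esub> (Sfin #>\<^bsub>PC\<^esub> g)))
       \<and> derived Ghat Gh = {h \<in> carrier PC. epsilon h = 0} \<inter> DGhat
       \<and> card (rcosets\<^bsub>PC\<lparr>carrier := DGhat\<rparr>\<^esub> (derived Ghat Gh)) = 2
       \<and> (derived G (carrier G) = carrier G \<longrightarrow> Ghat Mod derived Ghat Gh \<cong> Z2)"
proof -
  interpret sign_extension PC Sfin epsilon Gh using sign_extension_PC assms(1,2) .
  show ?thesis
    unfolding Ghat_def G_def DGhat_def image_grp_def hat_derived_def derived_Ghat
    using abelianization_iso derived_eq_kernel_inter card_rcosets_derived perfect_imp_iso_Z2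
    by (simp add: derived_Ghat)
qed

end
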